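(* Let $\Sigma$ be a signature, $T$ a monad on sets carrying a continuous $\Sigma$-algebra structure, and $\Gamma$ a relator for the monad $T$ that is inductive and respects $\Sigma$. Then the closed part of the Howe extension $\precsim^H$ of applicative $\Gamma$-similarity, namely $(\{(M,N)\mid\emptyset\vdash M\precsim^H_{\mathcal{T}}N\},\{(V,W)\mid\emptyset\vdash V\precsim^H_{\mathcal{V}}W\})$, is an applicative $\Gamma$-simulation.
   Context: An $\omega$CPPO is a poset with least element $\bot$ in which every $\omega$-chain has a lub; continuous = monotone and preserving such lubs. $T$ (unit $\eta$, bind $u\texttt{>>=}f$) carries a continuous $\Sigma$-algebra structure if each $TX$ is an $\omega$CPPO, bind is continuous in both arguments, and each $\sigma\in\Sigma$ of arity $k$ is interpreted by a continuous $\sigma^T:(TX)^k\to TX$. A relator $\Gamma$ for $T$ assigns to each $R\subseteq X\times Y$ a relation $\Gamma R\subseteq TX\times TY$ with: $=_{TX}\subseteq\Gamma(=_X)$; $\Gamma S\circ\Gamma R\subseteq\Gamma(S\circ R)$; $\Gamma((f\times g)^{-1}R)=(Tf\times Tg)^{-1}\Gamma R$ where $(f\times g)^{-1}R=\{(z,w)\mid f(z)\,R\,g(w)\}$; monotone in $R$; $x\,R\,y\Rightarrow\eta(x)\,\Gamma R\,\eta(y)$; and if $x\,R\,y\Rightarrow f(x)\,\Gamma S\,g(y)$ for all $x,y$ then $u\,\Gamma R\,v\Rightarrow(u\texttt{>>=}f)\,\Gamma S\,(v\texttt{>>=}g)$. Inductive: for every $R$, $\bot\,\Gamma R\,v$ for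 all $v$, and for every $\omega$-chain $(u_n)$, $(\forall n.\ u_n\,\Gamma R\,v)\Rightarrow\bigsqcup_n u_n\,\Gamma R\,v$. Respects $\Sigma$: $u_i\,\Gamma R\,v_i$ for all $i$ implies $\sigma^T(\vec u)\,\Gamma R\,\sigma^T(\vec v)$. Terms/values: $M,N::=\mathsf{return}\,V\mid VW\mid(M\ \mathsf{to}\ x.N)\mid\sigma(M_1,\dots,M_{\alpha(\sigma)})$, $V,W::=x\mid\lambda x.M$, modulo $\alpha$-equivalence; $M[V/x]$ substitution; $\mathcal{T}_0,\mathcal{V}_0$ closed terms/values; $\mathcal{T}(\bar x),\mathcal{V}(\bar x)$ those with free variables in $\bar x$. For closed $M$: $M^{(0)}=\bot$, $(\mathsf{return}\,V)^{(n+1)}=\eta(V)$, $((\lambda x.M)V)^{(n+1)}=(M[V/x])^{(n)}$, $(M\ \mathsf{to}\ x.N)^{(n+1)}=M^{(n)}\texttt{>>=}(V\mapsto(N[V/x])^{(n)})$, $(\sigma(\vec M))^{(n+1)}=\sigma^T(M_1^{(n)},\dots)$; this is an $\omega$-chain and $[\![M]\!]=\bigsqcup_nM^{(n)}$. A closed relation $R=(R_{\mathcal{T}}\subseteq\mathcal{T}_0\times\mathcal{T}_0,R_{\mathcal{V}}\subseteq\mathcal{V}_0\times\mathcal{V}_0)$ is an applicative $\Gamma$-simulation if $M\,R_{\mathcal{T}}\,N\Rightarrow[\![M]\!]\,\Gamma R_{\mathcal{V}}\,[\![N]\!]$ and $V\,R_{\mathcal{V}}\,W\Rightarrow VU\,R_{\mathcal{T}}\,WU$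 for every closed value $U$. Applicative $\Gamma$-similarity $\precsim$ is the largest one. Its open extension $\precsim^\circ$: $\bar x\vdash M\precsim^\circ_{\mathcal{T}}N$ iff $M,N\in\mathcal{T}(\bar x)$ and $M[\bar V/\bar x]\precsim_{\mathcal{T}}N[\bar V/\bar x]$ for all closed values $\bar V$ (similarly for values). The Howe extension $\precsim^H$ is the least pair of sets of triples closed under: (H1) if $x\in\bar x$ and $\bar x\vdash x\precsim^\circ_{\mathcal{V}}V$ then $\bar x\vdash x\precsim^H_{\mathcal{V}}V$; (H2) if $x\notin\bar x$, $\bar x\cup\{x\}\vdash M\precsim^H_{\mathcal{T}}L$ and $\bar x\vdash\lambda x.L\precsim^\circ_{\mathcal{V}}V$ then $\bar x\vdash\lambda x.M\precsim^H_{\mathcal{V}}V$; (H3) if $\bar x\vdash V\precsim^H_{\mathcal{V}}W$ and $\bar x\vdash\mathsf{return}\,W\precsim^\circ_{\mathcal{T}}N$ then $\bar x\vdash\mathsf{return}\,V\precsim^H_{\mathcal{T}}N$; (H4) if $\bar x\vdash V\precsim^H_{\mathcal{V}}V'$, $\bar x\vdash W\precsim^H_{\mathcal{V}}W'$, $\bar x\vdash V'W'\precsim^\circ_{\mathcal{T}}N$ then $\bar x\vdash VW\precsim^H_{\mathcal{T}}N$; (H5) if $\bar x\vdash M\precsim^H_{\mathcal{T}}L$, $\bar x\cup\{x\}\vdash M'\precsim^H_{\mathcal{T}}L'$, $\bar x\vdash(L\ \mathsf{to}\ x.L')\precsim^\circ_{\mathcal{T}}N$ then $\bar x\vdash(M\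 \mathsf{to}\ x.M')\precsim^H_{\mathcal{T}}N$; (H6) if $\bar x\vdash M_k\precsim^H_{\mathcal{T}}N_k$ for all $k\le n$ and $\bar x\vdash\sigma(N_1,\dots,N_n)\precsim^\circ_{\mathcal{T}}N$ then $\bar x\vdash\sigma(M_1,\dots,M_n)\precsim^H_{\mathcal{T}}N$. *)

theory Defs
  imports Main
begin

section \<open>Syntax (de Bruijn indices, so terms are identified up to alpha-equivalence)\<close>

text \<open>The signature Sigma is a type of operation symbols 'op together with an arity
  function (a field of the record below).  Variable x_i of a context of length n is
  Var i (i < n); binders bind index 0.\<close>

datatype 'op trm =
    Ret "'op val"
  | App "'op val" "'op val"
  | To "'op trm" "'op trm"        (* To M N  =  M to x. N, with x bound as index 0 in N *)
  | Op 'op "'op trm list"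
and 'op val =
    Var nat
  | Lam "'op trm"                 (* Lam M  =  lambda x. M, x bound as index 0 *)

fun lift_trm :: "nat \<Rightarrow> 'op trm \<Rightarrow> 'op trm"
and lift_val :: "nat \<Rightarrow> 'op val \<Rightarrow> 'op val" where
  "lift_val k (Var i) = Var (if i < k then i else Suc i)"
| "lift_val k (Lam M) = Lam (lift_trm (Suc k) M)"
| "lift_trm k (Ret V) = Ret (lift_val k V)"
| "lift_trm k (App V W) = App (lift_val k V) (lift_val k W)"
| "lift_trm k (To M N) = To (lift_trm k M) (lift_trm (Suc k) N)"
| "lift_trm k (Op s Ms) = Op s (map (lift_trm k) Ms)"

definition ext_subst :: "(nat \<Rightarrow> 'op val) \<Rightarrow> nat \<Rightarrow> 'op val" where
  "ext_subst s = (\<lambda>i. case i of 0 \<Rightarrow> Var 0 | Suc j \<Rightarrow> lift_val 0 (s j))"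

fun psubst_trm :: "(nat \<Rightarrow> 'op val) \<Rightarrow> 'op trm \<Rightarrow> 'op trm"
and psubst_val :: "(nat \<Rightarrow> 'op val) \<Rightarrow> 'op val \<Rightarrow> 'op val" where
  "psubst_val s (Var i) = s i"
| "psubst_val s (Lam M) = Lam (psubst_trm (ext_subst s) M)"
| "psubst_trm s (Ret V) = Ret (psubst_val s V)"
| "psubst_trm s (App V W) = App (psubst_val s V) (psubst_val s W)"
| "psubst_trm s (To M N) = To (psubst_trm s M) (psubst_trm (ext_subst s) N)"
| "psubst_trm s (Op o' Ms) = Op o' (map (psubst_trm s) Ms)"

definition subst1 :: "'op val \<Rightarrow> 'op trm \<Rightarrow> 'op trm" where
  "subst1 V M = psubst_trm (\<lambda>i. case i of 0 \<Rightarrow> V | Suc j \<Rightarrow> Var j) M"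

text \<open>Well-formed terms/values with free variables among the first n (the sets T(x1..xn),
  V(x1..xn)); operation symbols must be applied to exactly arity-many arguments.\<close>
fun wf_trm :: "('op \<Rightarrow> nat) \<Rightarrow> nat \<Rightarrow> 'op trm \<Rightarrow> bool"
and wf_val :: "('op \<Rightarrow> nat) \<Rightarrow> nat \<Rightarrow> 'op val \<Rightarrow> bool" where
  "wf_val ar n (Var i) = (i < n)"
| "wf_val ar n (Lam M) = wf_trm ar (Suc n) M"
| "wf_trm ar n (Ret V) = wf_val ar n V"
| "wf_trm ar n (App V W) = (wf_val ar n V \<and> wf_val ar n W)"
| "wf_trm ar n (To M N) = (wf_trm ar n M \<and> wf_trm ar (Suc n) N)"
| "wf_trm ar n (Op s Ms) = (length Ms = ar s \<and> (\<forall>M\<in>set Ms. wf_trm ar n M))"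

text \<open>The type 't plays the role of T X for X = V_0 (the set of closed values);
  all monad/relator data is only needed (and only axiomatised) at this instance.\<close>
record ('op, 't) effsem =
  sig_ar   :: "'op \<Rightarrow> nat"
  ord_le   :: "'t \<Rightarrow> 't \<Rightarrow> bool"
  ord_bot  :: "'t"
  m_unit   :: "'op val \<Rightarrow> 't"
  m_bind   :: "'t \<Rightarrow> ('op val \<Rightarrow> 't) \<Rightarrow> 't"
  op_int   :: "'op \<Rightarrow> 't list \<Rightarrow> 't"
  rlt      :: "('op val \<Rightarrow> 'op val \<Rightarrow> bool) \<Rightarrow> 't \<Rightarrow> 't \<Rightarrow> bool"

definition cval :: "('op, 't) effsem \<Rightarrow> 'op val \<Rightarrow> bool" where
  "cval S V = wf_val (sig_ar S) 0 V"

definition ctrm :: "('op, 't) effsem \<Rightarrow> 'op trm \<Rightarrow> bool" where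
  "ctrm S M = wf_trm (sig_ar S) 0 M"

definition is_lub :: "('t \<Rightarrow> 't \<Rightarrow> bool) \<Rightarrow> 't set \<Rightarrow> 't \<Rightarrow> bool" where
  "is_lub le A x = ((\<forall>a\<in>A. le a x) \<and> (\<forall>b. (\<forall>a\<in>A. le a b) \<longrightarrow> le x b))"

definition omega_chain :: "('t \<Rightarrow> 't \<Rightarrow> bool) \<Rightarrow> (nat \<Rightarrow> 't) \<Rightarrow> bool" where
  "omega_chain le c = (\<forall>n. le (c n) (c (Suc n)))"

definition lub :: "('op, 't) effsem \<Rightarrow> (nat \<Rightarrow> 't) \<Rightarrow> 't" where
  "lub S c = (THE x. is_lub (ord_le S) (range c) x)"

definition omega_cppo :: "('t \<Rightarrow> 't \<Rightarrow> bool) \<Rightarrow> 't \<Rightarrow> bool" where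
  "omega_cppo le bt =
     ((\<forall>x. le x x) \<and> (\<forall>x y z. le x y \<longrightarrow> le y z \<longrightarrow> le x z)
      \<and> (\<forall>x y. le x y \<longrightarrow> le y x \<longrightarrow> x = y)
      \<and> (\<forall>x. le bt x)
      \<and> (\<forall>c. omega_chain le c \<longrightarrow> (\<exists>x. is_lub le (range c) x)))"

definition cont_sigma_monad :: "('op, 't) effsem \<Rightarrow> bool" where
  "cont_sigma_monad S =
     (omega_cppo (ord_le S) (ord_bot S)
      \<comment> \<open>monad laws\<close>
      \<and> (\<forall>x f. cval S x \<longrightarrow> m_bind S (m_unit S x) f = f x)
      \<and> (\<forall>u. m_bind S u (m_unit S) = u)
      \<and> (\<forall>u f g. m_bind S (m_bind S u f) g = m_bind S u (\<lambda>x. m_bind S (f x) g))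
      \<comment> \<open>bind continuous in its first argument\<close>
      \<and> (\<forall>u v f. ord_le S u v \<longrightarrow> ord_le S (m_bind S u f) (m_bind S v f))
      \<and> (\<forall>c f. omega_chain (ord_le S) c \<longrightarrow>
                m_bind S (lub S c) f = lub S (\<lambda>n. m_bind S (c n) f))
      \<comment> \<open>bind continuous in its second argument (pointwise order on V_0 -> T V_0)\<close>
      \<and> (\<forall>u f g. (\<forall>x. cval S x \<longrightarrow> ord_le S (f x) (g x)) \<longrightarrow>
                 ord_le S (m_bind S u f) (m_bind S u g))
      \<and> (\<forall>u F. (\<forall>x. cval S x \<longrightarrow> omega_chain (ord_le S) (\<lambda>n. F n x)) \<longrightarrow>
                m_bind S u (\<lambda>x. lub S (\<lambda>n. F n x)) = lub S (\<lambda>n. m_bind S u (F n)))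
      \<comment> \<open>each operation symbol interpreted by a continuous map (T X)^k -> T X\<close>
      \<and> (\<forall>s us vs. length us = sig_ar S s \<longrightarrow> list_all2 (ord_le S) us vs \<longrightarrow>
                   ord_le S (op_int S s us) (op_int S s vs))
      \<and> (\<forall>s c. (\<forall>n. length (c n) = sig_ar S s) \<longrightarrow>
               (\<forall>n. list_all2 (ord_le S) (c n) (c (Suc n))) \<longrightarrow>
               op_int S s (map (\<lambda>i. lub S (\<lambda>n. c n ! i)) [0..<sig_ar S s])
                 = lub S (\<lambda>n. op_int S s (c n))))"

definition Tmap :: "('op, 't) effsem \<Rightarrow> ('op val \<Rightarrow> 'op val) \<Rightarrow> 't \<Rightarrow> 't" where
  "Tmap S f u = m_bind S u (\<lambda>x. m_unit S (f x))"

definition is_relator :: "('op, 't) effsem \<Rightarrow> bool" where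
  "is_relator S =
     ((\<forall>u. rlt S (\<lambda>x y. cval S x \<and> x = y) u u)
      \<and> (\<forall>R Q u v w. rlt S R u v \<longrightarrow> rlt S Q v w \<longrightarrow> rlt S (R OO Q) u w)
      \<and> (\<forall>f g R u v. (\<forall>x. cval S x \<longrightarrow> cval S (f x)) \<longrightarrow> (\<forall>x. cval S x \<longrightarrow> cval S (g x)) \<longrightarrow>
           (rlt S (\<lambda>z w. cval S z \<and> cval S w \<and> R (f z) (g w)) u v
              = rlt S R (Tmap S f u) (Tmap S g v)))
      \<and> (\<forall>R Q u v. (\<forall>x y. R x y \<longrightarrow> Q x y) \<longrightarrow> rlt S R u v \<longrightarrow> rlt S Q u v)
      \<and> (\<forall>R x y. cval S x \<longrightarrow> cval S y \<longrightarrow> R x y \<longrightarrow> rlt S R (m_unit S x) (m_unit S y))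
      \<and> (\<forall>R Q f g u v. (\<forall>x y. cval S x \<longrightarrow> cval S y \<longrightarrow> R x y \<longrightarrow> rlt S Q (f x) (g y)) \<longrightarrow>
           rlt S R u v \<longrightarrow> rlt S Q (m_bind S u f) (m_bind S v g)))"

definition inductive_relator :: "('op, 't) effsem \<Rightarrow> bool" where
  "inductive_relator S =
     (\<forall>R. (\<forall>v. rlt S R (ord_bot S) v)
        \<and> (\<forall>c v. omega_chain (ord_le S) c \<longrightarrow> (\<forall>n. rlt S R (c n) v) \<longrightarrow> rlt S R (lub S c) v))"

definition respects_sigma :: "('op, 't) effsem \<Rightarrow> bool" where
  "respects_sigma S =
     (\<forall>R s us vs. length us = sig_ar S s \<longrightarrow> list_all2 (rlt S R) us vs \<longrightarrow>
        rlt S R (op_int S s us) (op_int S s vs))"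

primrec approx :: "('op, 't) effsem \<Rightarrow> nat \<Rightarrow> 'op trm \<Rightarrow> 't" where
  "approx S 0 M = ord_bot S"
| "approx S (Suc n) M =
     (case M of
        Ret V \<Rightarrow> m_unit S V
      | App V W \<Rightarrow> (case V of Lam M' \<Rightarrow> approx S n (subst1 W M') | Var _ \<Rightarrow> ord_bot S)
      | To M1 N \<Rightarrow> m_bind S (approx S n M1) (\<lambda>V. approx S n (subst1 V N))
      | Op s Ms \<Rightarrow> op_int S s (map (approx S n) Ms))"

definition sem :: "('op, 't) effsem \<Rightarrow> 'op trm \<Rightarrow> 't" where
  "sem S M = lub S (\<lambda>n. approx S n M)"

definition app_sim :: "('op, 't) effsem \<Rightarrow> ('op trm \<Rightarrow> 'op trm \<Rightarrow> bool)
                        \<Rightarrow> ('op val \<Rightarrow> 'op val \<Rightarrow> bool) \<Rightarrow> bool" where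
  "app_sim S RT RV =
     ((\<forall>M N. RT M N \<longrightarrow> ctrm S M \<and> ctrm S N)
      \<and> (\<forall>V W. RV V W \<longrightarrow> cval S V \<and> cval S W)
      \<and> (\<forall>M N. RT M N \<longrightarrow> rlt S RV (sem S M) (sem S N))
      \<and> (\<forall>V W U. RV V W \<longrightarrow> cval S U \<longrightarrow> RT (App V U) (App W U)))"

definition simT :: "('op, 't) effsem \<Rightarrow> 'op trm \<Rightarrow> 'op trm \<Rightarrow> bool" where
  "simT S M N = (\<exists>RT RV. app_sim S RT RV \<and> RT M N)"

definition simV :: "('op, 't) effsem \<Rightarrow> 'op val \<Rightarrow> 'op val \<Rightarrow> bool" where
  "simV S V W = (\<exists>RT RV. app_sim S RT RV \<and> RV V W)"

definition openT :: "('op, 't) effsem \<Rightarrow> nat \<Rightarrow> 'op trm \<Rightarrow> 'op trm \<Rightarrow> bool" where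
  "openT S n M N =
     (wf_trm (sig_ar S) n M \<and> wf_trm (sig_ar S) n N \<and>
      (\<forall>vs. (\<forall>i<n. cval S (vs i)) \<longrightarrow> simT S (psubst_trm vs M) (psubst_trm vs N)))"

definition openV :: "('op, 't) effsem \<Rightarrow> nat \<Rightarrow> 'op val \<Rightarrow> 'op val \<Rightarrow> bool" where
  "openV S n V W =
     (wf_val (sig_ar S) n V \<and> wf_val (sig_ar S) n W \<and>
      (\<forall>vs. (\<forall>i<n. cval S (vs i)) \<longrightarrow> simV S (psubst_val vs V) (psubst_val vs W)))"

inductive howeT :: "('op, 't) effsem \<Rightarrow> nat \<Rightarrow> 'op trm \<Rightarrow> 'op trm \<Rightarrow> bool"
and howeV :: "('op, 't) effsem \<Rightarrow> nat \<Rightarrow> 'op val \<Rightarrow> 'op val \<Rightarrow> bool"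
for S :: "('op, 't) effsem" where
  H1: "i < n \<Longrightarrow> openV S n (Var i) V \<Longrightarrow> howeV S n (Var i) V"
| H2: "howeT S (Suc n) M L \<Longrightarrow> openV S n (Lam L) V \<Longrightarrow> howeV S n (Lam M) V"
| H3: "howeV S n V W \<Longrightarrow> openT S n (Ret W) N \<Longrightarrow> howeT S n (Ret V) N"
| H4: "howeV S n V V' \<Longrightarrow> howeV S n W W' \<Longrightarrow> openT S n (App V' W') N
         \<Longrightarrow> howeT S n (App V W) N"
| H5: "howeT S n M L \<Longrightarrow> howeT S (Suc n) M' L' \<Longrightarrow> openT S n (To L L') N
         \<Longrightarrow> howeT S n (To M M') N"
| H6: "length Ms = length Ns \<Longrightarrow> (\<forall>k<length Ms. howeT S n (Ms ! k) (Ns ! k))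
         \<Longrightarrow> openT S n (Op s Ns) N \<Longrightarrow> howeT S n (Op s Ms) N"

end

theory Submission
  imports Defs
begin

text \<open>Howe's method. The Howe extension is compatible with every term former by construction,
  contains the open extension of similarity, absorbs it on the right, and is substitutive.
  For closed Howe-related M and N one shows by induction on n that the n-th approximant of M
  is Gamma-related to the denotation of N: each syntactic case is handled by the corresponding
  relator axiom (unit, bind, Sigma-respect) after rewriting the denotation of the intermediate
  term by its operational equation, and the similarity step at the end of a Howe derivation is
  absorbed by relator composition. Inductivity of Gamma then passes to the least upper bound,
  i.e. to the denotation of M.\<close>

section \<open>Substitution\<close>

abbreviation ren :: "(nat \<Rightarrow> nat) \<Rightarrow> nat \<Rightarrow> 'op val" where
  "ren r \<equiv> \<lambda>i. Var (r i)"

definition up_ren :: "(nat \<Rightarrow> nat) \<Rightarrow> nat \<Rightarrow> nat" where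
  "up_ren r i = (case i of 0 \<Rightarrow> 0 | Suc j \<Rightarrow> Suc (r j))"

lemma ext_subst_ren: "ext_subst (ren r) = ren (up_ren r)"
  by (auto simp: ext_subst_def up_ren_def split: nat.split)

lemma ext_subst_Var: "ext_subst Var = Var"
  by (auto simp: ext_subst_def split: nat.split)

lemma ext_subst_cong: "\<forall>i<m. s i = t i \<Longrightarrow> \<forall>i<Suc m. ext_subst s i = ext_subst t i"
  by (auto simp: ext_subst_def split: nat.split)

lemma wf_lift:
  fixes M :: "'op trm" and V :: "'op val"
  shows "wf_trm ar n M \<Longrightarrow> wf_trm ar (Suc n) (lift_trm j M)"
    and "wf_val ar n V \<Longrightarrow> wf_val ar (Suc n) (lift_val j V)"
  by (induction M and V arbitrary: n j and n j) auto

lemma wf_ext_subst: "\<forall>i<m. wf_val ar k (s i) \<Longrightarrow> \<forall>i<Suc m. wf_val ar (Suc k) (ext_subst s i)"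
  by (auto simp: ext_subst_def wf_lift split: nat.split)

lemma wf_psubst:
  fixes M :: "'op trm" and V :: "'op val"
  shows "wf_trm ar m M \<Longrightarrow> \<forall>i<m. wf_val ar k (s i) \<Longrightarrow> wf_trm ar k (psubst_trm s M)"
    and "wf_val ar m V \<Longrightarrow> \<forall>i<m. wf_val ar k (s i) \<Longrightarrow> wf_val ar k (psubst_val s V)"
  by (induction M and V arbitrary: m k s and m k s) (auto dest: wf_ext_subst)

lemma wf_subst1: "wf_val ar 0 V \<Longrightarrow> wf_trm ar (Suc 0) N \<Longrightarrow> wf_trm ar 0 (subst1 V N)"
  unfolding subst1_def by (rule wf_psubst(1)) auto

lemma psubst_cong:
  fixes M :: "'op trm" and V :: "'op val"
  shows "wf_trm ar m M \<Longrightarrow> \<forall>i<m. s i = t i \<Longrightarrow> psubst_trm s M = psubst_trm t M"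
    and "wf_val ar m V \<Longrightarrow> \<forall>i<m. s i = t i \<Longrightarrow> psubst_val s V = psubst_val t V"
proof (induction M and V arbitrary: m s t and m s t)
  case (Lam M) thus ?case using ext_subst_cong[OF Lam.prems(2)] by auto
next
  case (To M N) thus ?case using ext_subst_cong[OF To.prems(2)] by auto
qed auto

lemma psubst_Var:
  fixes M :: "'op trm" and V :: "'op val"
  shows "psubst_trm Var M = M" and "psubst_val Var V = V"
  by (induction M and V) (auto simp: ext_subst_Var intro: map_idI)

lemma psubst_closed:
  shows "wf_trm ar 0 M \<Longrightarrow> psubst_trm s M = M" and "wf_val ar 0 V \<Longrightarrow> psubst_val s V = V"
  using psubst_cong[of ar 0 _ s Var] psubst_Var by auto

lemma lift_eq_psubst:
  fixes M :: "'op trm" and V :: "'op val"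
  shows "lift_trm k M = psubst_trm (ren (\<lambda>i. if i < k then i else Suc i)) M"
    and "lift_val k V = psubst_val (ren (\<lambda>i. if i < k then i else Suc i)) V"
proof -
  have ext: "ext_subst (ren (\<lambda>i. if i < k then i else Suc i))
      = ren (\<lambda>i. if i < Suc k then i else Suc i)" for k
    by (auto simp: ext_subst_def split: nat.split)
  show "lift_trm k M = psubst_trm (ren (\<lambda>i. if i < k then i else Suc i)) M"
       "lift_val k V = psubst_val (ren (\<lambda>i. if i < k then i else Suc i)) V"
    by (induction M and V arbitrary: k and k) (auto simp: ext)
qed

lemma lift_val_0: "lift_val 0 V = psubst_val (ren Suc) V"
  using lift_eq_psubst(2)[of 0 V] by simp

lemma psubst_ren:
  fixes M :: "'op trm" and V :: "'op val"
  shows "psubst_trm s (psubst_trm (ren r) M) = psubst_trm (s \<circ> r) M"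
    and "psubst_val s (psubst_val (ren r) V) = psubst_val (s \<circ> r) V"
proof -
  have ext: "ext_subst s \<circ> up_ren r = ext_subst (s \<circ> r)" for s r
    by (auto simp: ext_subst_def up_ren_def split: nat.split)
  show "psubst_trm s (psubst_trm (ren r) M) = psubst_trm (s \<circ> r) M"
       "psubst_val s (psubst_val (ren r) V) = psubst_val (s \<circ> r) V"
    by (induction M and V arbitrary: s r and s r) (auto simp: ext_subst_ren ext)
qed

lemma ren_psubst:
  fixes M :: "'op trm" and V :: "'op val"
  shows "psubst_trm (ren r) (psubst_trm s M) = psubst_trm (psubst_val (ren r) \<circ> s) M"
    and "psubst_val (ren r) (psubst_val s V) = psubst_val (psubst_val (ren r) \<circ> s) V"
proof -
  have ext: "ext_subst (psubst_val (ren r) \<circ> s) = psubst_val (ren (up_ren r)) \<circ> ext_subst s" for s r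
    by (auto simp: ext_subst_def lift_val_0 psubst_ren up_ren_def o_def split: nat.split)
  show "psubst_trm (ren r) (psubst_trm s M) = psubst_trm (psubst_val (ren r) \<circ> s) M"
       "psubst_val (ren r) (psubst_val s V) = psubst_val (psubst_val (ren r) \<circ> s) V"
    by (induction M and V arbitrary: s r and s r) (auto simp: ext_subst_ren ext)
qed

lemma psubst_psubst:
  fixes M :: "'op trm" and V :: "'op val"
  shows "psubst_trm s (psubst_trm t M) = psubst_trm (psubst_val s \<circ> t) M"
    and "psubst_val s (psubst_val t V) = psubst_val (psubst_val s \<circ> t) V"
proof -
  have ext: "ext_subst (psubst_val s \<circ> t) = psubst_val (ext_subst s) \<circ> ext_subst t" for s t
    by (auto simp: ext_subst_def lift_val_0 psubst_ren ren_psubst o_def split: nat.split)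
  show "psubst_trm s (psubst_trm t M) = psubst_trm (psubst_val s \<circ> t) M"
       "psubst_val s (psubst_val t V) = psubst_val (psubst_val s \<circ> t) V"
    by (induction M and V arbitrary: s t and s t) (auto simp: ext)
qed

locale cppo_sem =
  fixes S :: "('op, 't) effsem"
  assumes cppo: "omega_cppo (ord_le S) (ord_bot S)"
begin

abbreviation le where "le \<equiv> ord_le S"

lemma le_refl: "le x x"
  using cppo unfolding omega_cppo_def by blast

lemma le_trans [trans]: "le x y \<Longrightarrow> le y z \<Longrightarrow> le x z"
  using cppo unfolding omega_cppo_def by blast

lemma le_antisym: "le x y \<Longrightarrow> le y x \<Longrightarrow> x = y"
  using cppo unfolding omega_cppo_def by blast

lemma bot_le: "le (ord_bot S) x"
  using cppo unfolding omega_cppo_def by blast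

lemma lub_eqI: "is_lub le (range c) x \<Longrightarrow> lub S c = x"
  unfolding lub_def by (rule the_equality) (auto simp: is_lub_def intro: le_antisym)

lemma is_lub_lub: "omega_chain le c \<Longrightarrow> is_lub le (range c) (lub S c)"
  using cppo lub_eqI unfolding omega_cppo_def by metis

lemma lub_upper: "omega_chain le c \<Longrightarrow> le (c n) (lub S c)"
  using is_lub_lub unfolding is_lub_def by blast

lemma lub_least: "omega_chain le c \<Longrightarrow> (\<And>n. le (c n) b) \<Longrightarrow> le (lub S c) b"
  using is_lub_lub unfolding is_lub_def by blast

lemma omega_chain_mono: "omega_chain le c \<Longrightarrow> m \<le> n \<Longrightarrow> le (c m) (c n)"
  by (induction n) (auto simp: omega_chain_def le_Suc_eq intro: le_refl le_trans)

lemma lub_const: "lub S (\<lambda>n. x) = x"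
  by (rule lub_eqI) (auto simp: is_lub_def le_refl)

lemma lub_Suc_shift:
  assumes "omega_chain le c"
  shows "lub S (\<lambda>n. c (Suc n)) = lub S c"
proof (rule lub_eqI)
  have "le (c n) b" if "\<forall>n. le (c (Suc n)) b" for n b
    using that assms le_trans unfolding omega_chain_def by blast
  then show "is_lub le (range (\<lambda>n. c (Suc n))) (lub S c)"
    using assms by (auto simp: is_lub_def intro: lub_upper lub_least)
qed

lemma lub_diagonal:
  assumes mono: "\<And>m n m' n'. m \<le> m' \<Longrightarrow> n \<le> n' \<Longrightarrow> le (F m n) (F m' n')"
  shows "lub S (\<lambda>m. lub S (F m)) = lub S (\<lambda>n. F n n)"
proof -
  have rows: "omega_chain le (F m)" for m
    using mono unfolding omega_chain_def by simp
  have diag: "omega_chain le (\<lambda>n. F n n)"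
    using mono unfolding omega_chain_def by simp
  have "le (F m n) (lub S (F m'))" if "m \<le> m'" for m m' n
    using le_trans[OF mono[OF that order_refl] lub_upper[OF rows]] .
  then have cols: "omega_chain le (\<lambda>m. lub S (F m))"
    unfolding omega_chain_def by (simp add: lub_least[OF rows])
  have "le (F m n) (lub S (\<lambda>n. F n n))" for m n
    using le_trans[OF mono[of m "max m n" n "max m n"] lub_upper[OF diag]] by simp
  moreover have "le (F n n) (lub S (\<lambda>m. lub S (F m)))" for n
    using le_trans[OF lub_upper[OF rows] lub_upper[OF cols]] .
  ultimately show ?thesis
    by (intro le_antisym lub_least[OF cols] lub_least[OF rows] lub_least[OF diag])
qed

end

section \<open>Denotations of closed terms\<close>

locale cont_sigma_sem =
  fixes S :: "('op, 't) effsem"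
  assumes cont_sigma: "cont_sigma_monad S"

sublocale cont_sigma_sem \<subseteq> cppo_sem
  using cont_sigma by unfold_locales (simp add: cont_sigma_monad_def)

context cont_sigma_sem
begin

lemma bind_mono_left: "le u v \<Longrightarrow> le (m_bind S u f) (m_bind S v f)"
  using cont_sigma unfolding cont_sigma_monad_def by (elim conjE) blast

lemma bind_lub_left: "omega_chain le c \<Longrightarrow> m_bind S (lub S c) f = lub S (\<lambda>n. m_bind S (c n) f)"
  using cont_sigma unfolding cont_sigma_monad_def by (elim conjE) blast

lemma bind_mono_right: "(\<And>x. cval S x \<Longrightarrow> le (f x) (g x)) \<Longrightarrow> le (m_bind S u f) (m_bind S u g)"
  using cont_sigma unfolding cont_sigma_monad_def by (elim conjE) blast

lemma bind_lub_right:
  "(\<And>x. cval S x \<Longrightarrow> omega_chain le (\<lambda>n. F n x)) \<Longrightarrow>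
     m_bind S u (\<lambda>x. lub S (\<lambda>n. F n x)) = lub S (\<lambda>n. m_bind S u (F n))"
  using cont_sigma unfolding cont_sigma_monad_def by (elim conjE) blast

lemma op_int_mono:
  "length us = sig_ar S s \<Longrightarrow> list_all2 le us vs \<Longrightarrow> le (op_int S s us) (op_int S s vs)"
  using cont_sigma unfolding cont_sigma_monad_def by (elim conjE) blast

lemma op_int_lub:
  "(\<And>n. length (c n) = sig_ar S s) \<Longrightarrow> (\<And>n. list_all2 le (c n) (c (Suc n))) \<Longrightarrow>
     op_int S s (map (\<lambda>i. lub S (\<lambda>n. c n ! i)) [0..<sig_ar S s]) = lub S (\<lambda>n. op_int S s (c n))"
  using cont_sigma unfolding cont_sigma_monad_def by simp

lemma approx_le_approx_Suc: "ctrm S M \<Longrightarrow> le (approx S n M) (approx S (Suc n) M)"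
proof (induction n arbitrary: M)
  case 0 thus ?case by (simp add: bot_le)
next
  case (Suc n)
  show ?case
  proof (cases M)
    case (Ret V) thus ?thesis by (simp add: le_refl)
  next
    case (App V W)
    show ?thesis
    proof (cases V)
      case (Lam L)
      with Suc.prems App have "ctrm S (subst1 W L)"
        by (auto simp: ctrm_def cval_def intro: wf_subst1)
      with App Lam show ?thesis using Suc.IH by simp
    qed (simp add: App le_refl)
  next
    case (To M1 N)
    have M1: "ctrm S M1" and N: "\<And>V. cval S V \<Longrightarrow> ctrm S (subst1 V N)"
      using Suc.prems To by (auto simp: ctrm_def cval_def intro: wf_subst1)
    have "le (m_bind S (approx S n M1) (\<lambda>V. approx S n (subst1 V N)))
             (m_bind S (approx S (Suc n) M1) (\<lambda>V. approx S n (subst1 V N)))"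
      by (rule bind_mono_left) (rule Suc.IH[OF M1])
    also have "le \<dots> (m_bind S (approx S (Suc n) M1) (\<lambda>V. approx S (Suc n) (subst1 V N)))"
      by (rule bind_mono_right) (rule Suc.IH[OF N])
    finally show ?thesis using To by simp
  next
    case (Op s Ms)
    with Suc show ?thesis
      by (auto simp: ctrm_def list_all2_conv_all_nth intro!: op_int_mono)
  qed
qed

lemma approx_chain: "ctrm S M \<Longrightarrow> omega_chain le (\<lambda>n. approx S n M)"
  unfolding omega_chain_def using approx_le_approx_Suc by blast

lemma sem_eq_lub_approx_Suc: "ctrm S M \<Longrightarrow> sem S M = lub S (\<lambda>n. approx S (Suc n) M)"
  unfolding sem_def by (rule lub_Suc_shift[OF approx_chain, symmetric])

lemma sem_Ret: "cval S W \<Longrightarrow> sem S (Ret W) = m_unit S W"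
  using sem_eq_lub_approx_Suc[of "Ret W"] by (simp add: ctrm_def cval_def lub_const)

lemma sem_App_Lam:
  "cval S U \<Longrightarrow> wf_trm (sig_ar S) (Suc 0) L \<Longrightarrow> sem S (App (Lam L) U) = sem S (subst1 U L)"
  using sem_eq_lub_approx_Suc[of "App (Lam L) U"] by (simp add: ctrm_def cval_def sem_def)

lemma sem_To:
  assumes "ctrm S (To L L')"
  shows "sem S (To L L') = m_bind S (sem S L) (\<lambda>V. sem S (subst1 V L'))"
proof -
  have L: "ctrm S L" and L': "\<And>V. cval S V \<Longrightarrow> ctrm S (subst1 V L')"
    using assms by (auto simp: ctrm_def cval_def intro: wf_subst1)
  define G where "G m n = m_bind S (approx S m L) (\<lambda>V. approx S n (subst1 V L'))" for m n
  have "m_bind S (sem S L) (\<lambda>V. sem S (subst1 V L'))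
      = lub S (\<lambda>m. m_bind S (approx S m L) (\<lambda>V. sem S (subst1 V L')))"
    unfolding sem_def[of S L] using approx_chain[OF L] by (rule bind_lub_left)
  also have "\<dots> = lub S (\<lambda>m. lub S (G m))"
    unfolding sem_def G_def using bind_lub_right[OF approx_chain[OF L']] by simp
  also have "\<dots> = lub S (\<lambda>n. G n n)"
  proof (rule lub_diagonal)
    fix m n m' n' :: nat assume "m \<le> m'" "n \<le> n'"
    have "le (G m n) (G m' n)"
      unfolding G_def by (rule bind_mono_left, rule omega_chain_mono[OF approx_chain[OF L] \<open>m \<le> m'\<close>])
    moreover have "le (G m' n) (G m' n')"
      unfolding G_def by (rule bind_mono_right, rule omega_chain_mono[OF approx_chain[OF L'] \<open>n \<le> n'\<close>])
    ultimately show "le (G m n) (G m' n')" by (rule le_trans)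
  qed
  also have "\<dots> = sem S (To L L')"
    unfolding sem_eq_lub_approx_Suc[OF assms] G_def by simp
  finally show ?thesis by simp
qed

lemma sem_Op:
  assumes "ctrm S (Op s Ns)"
  shows "sem S (Op s Ns) = op_int S s (map (sem S) Ns)"
proof -
  have len: "length Ns = sig_ar S s" and Ns: "\<forall>N\<in>set Ns. ctrm S N"
    using assms by (auto simp: ctrm_def)
  have "map (sem S) Ns = map (\<lambda>i. lub S (\<lambda>n. map (approx S n) Ns ! i)) [0..<sig_ar S s]"
    using len by (auto simp: sem_def intro: nth_equalityI)
  also have "op_int S s \<dots> = lub S (\<lambda>n. op_int S s (map (approx S n) Ns))"
    using len Ns by (intro op_int_lub) (auto simp: list_all2_conv_all_nth simp del: approx.simps intro: approx_le_approx_Suc)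
  finally show ?thesis
    unfolding sem_eq_lub_approx_Suc[OF assms] by simp
qed

end

locale relator_sem =
  fixes S :: "('op, 't) effsem"
  assumes relator: "is_relator S"
begin

abbreviation ar where "ar \<equiv> sig_ar S"

lemma rlt_Id: "rlt S (\<lambda>x y. cval S x \<and> x = y) u u"
  using relator unfolding is_relator_def by simp

lemma rlt_OO: "rlt S R u v \<Longrightarrow> rlt S Q v w \<Longrightarrow> rlt S (R OO Q) u w"
  using relator unfolding is_relator_def by simp

lemma rlt_unit: "cval S x \<Longrightarrow> cval S y \<Longrightarrow> R x y \<Longrightarrow> rlt S R (m_unit S x) (m_unit S y)"
  using relator unfolding is_relator_def by simp

lemma rlt_mono:
  assumes "rlt S R u v" and "\<And>x y. R x y \<Longrightarrow> Q x y"
  shows "rlt S Q u v"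
proof -
  have "\<forall>R Q u v. (\<forall>x y. R x y \<longrightarrow> Q x y) \<longrightarrow> rlt S R u v \<longrightarrow> rlt S Q u v"
    using relator unfolding is_relator_def by (elim conjE) assumption
  then show ?thesis using assms by blast
qed

lemma rlt_bind:
  assumes "rlt S R u v" and "\<And>x y. cval S x \<Longrightarrow> cval S y \<Longrightarrow> R x y \<Longrightarrow> rlt S Q (f x) (g y)"
  shows "rlt S Q (m_bind S u f) (m_bind S v g)"
proof -
  have "\<forall>R Q f g u v. (\<forall>x y. cval S x \<longrightarrow> cval S y \<longrightarrow> R x y \<longrightarrow> rlt S Q (f x) (g y)) \<longrightarrow>
      rlt S R u v \<longrightarrow> rlt S Q (m_bind S u f) (m_bind S v g)"
    using relator unfolding is_relator_def by (elim conjE) assumption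
  then show ?thesis using assms by blast
qed

lemma app_simD:
  assumes "app_sim S RT RV"
  shows "RT M N \<Longrightarrow> ctrm S M \<and> ctrm S N"
    and "RV V W \<Longrightarrow> cval S V \<and> cval S W"
    and "RT M N \<Longrightarrow> rlt S RV (sem S M) (sem S N)"
    and "RV V W \<Longrightarrow> cval S U \<Longrightarrow> RT (App V U) (App W U)"
  using assms unfolding app_sim_def by simp_all

lemma app_sim_le_sim:
  assumes "app_sim S RT RV"
  shows "RT M N \<Longrightarrow> simT S M N" and "RV V W \<Longrightarrow> simV S V W"
  using assms unfolding simT_def simV_def by blast+

lemma app_sim_similarity: "app_sim S (simT S) (simV S)"
  unfolding app_sim_def
proof (intro conjI allI impI)
  fix M N assume "simT S M N"
  then obtain RT RV where sim: "app_sim S RT RV" and "RT M N"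
    unfolding simT_def by blast
  then show "ctrm S M" "ctrm S N" by (blast dest: app_simD(1))+
  from sim \<open>RT M N\<close> have "rlt S RV (sem S M) (sem S N)" by (rule app_simD)
  then show "rlt S (simV S) (sem S M) (sem S N)"
    by (rule rlt_mono) (rule app_sim_le_sim(2)[OF sim])
next
  fix V W assume "simV S V W"
  then obtain RT RV where sim: "app_sim S RT RV" and "RV V W"
    unfolding simV_def by blast
  then show "cval S V" "cval S W" by (blast dest: app_simD(2))+
  fix U assume "cval S U"
  with sim \<open>RV V W\<close> show "simT S (App V U) (App W U)"
    by (blast intro: app_simD(4) app_sim_le_sim(1)[OF sim])
qed

lemma simT_ctrm: "simT S M N \<Longrightarrow> ctrm S M \<and> ctrm S N"
  and simV_cval: "simV S V W \<Longrightarrow> cval S V \<and> cval S W"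
  and simT_sem: "simT S M N \<Longrightarrow> rlt S (simV S) (sem S M) (sem S N)"
  and simV_App: "simV S V W \<Longrightarrow> cval S U \<Longrightarrow> simT S (App V U) (App W U)"
  by (fact app_simD[OF app_sim_similarity])+

lemma simT_refl: "ctrm S M \<Longrightarrow> simT S M M"
  and simV_refl: "cval S V \<Longrightarrow> simV S V V"
proof -
  have "app_sim S (\<lambda>M N. ctrm S M \<and> M = N) (\<lambda>V W. cval S V \<and> V = W)"
    unfolding app_sim_def using rlt_Id by (auto simp: ctrm_def cval_def)
  then show "ctrm S M \<Longrightarrow> simT S M M" "cval S V \<Longrightarrow> simV S V V"
    by (simp_all add: app_sim_le_sim)
qed

lemma simT_trans: "simT S M N \<Longrightarrow> simT S N P \<Longrightarrow> simT S M P"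
  and simV_trans: "simV S V W \<Longrightarrow> simV S W X \<Longrightarrow> simV S V X"
proof -
  have trans: "app_sim S (simT S OO simT S) (simV S OO simV S)"
    unfolding app_sim_def
    by (intro conjI allI impI)
      (auto dest: simT_ctrm simV_cval simT_sem intro: rlt_OO simV_App)
  show "simT S M N \<Longrightarrow> simT S N P \<Longrightarrow> simT S M P"
    by (blast intro: app_sim_le_sim(1)[OF trans])
  show "simV S V W \<Longrightarrow> simV S W X \<Longrightarrow> simV S V X"
    by (blast intro: app_sim_le_sim(2)[OF trans])
qed

lemma openT_0_iff: "openT S 0 M N \<longleftrightarrow> simT S M N"
  using simT_ctrm[of M N] psubst_closed(1)[of ar M] psubst_closed(1)[of ar N]
  unfolding openT_def ctrm_def by auto

lemma openV_0_iff: "openV S 0 V W \<longleftrightarrow> simV S V W"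
  using simV_cval[of V W] psubst_closed(2)[of ar V] psubst_closed(2)[of ar W]
  unfolding openV_def cval_def by auto

lemma cval_psubst: "\<forall>i<m. wf_val ar k (\<sigma> i) \<Longrightarrow> \<forall>i<k. cval S (vs i) \<Longrightarrow> \<forall>i<m. cval S (psubst_val vs (\<sigma> i))"
  unfolding cval_def using wf_psubst(2) by blast

lemma openT_refl: "wf_trm ar m M \<Longrightarrow> openT S m M M"
  unfolding openT_def ctrm_def cval_def by (blast intro: simT_refl[unfolded ctrm_def] wf_psubst(1))

lemma openV_refl: "wf_val ar m V \<Longrightarrow> openV S m V V"
  unfolding openV_def cval_def by (blast intro: simV_refl[unfolded cval_def] wf_psubst(2))

lemma openT_trans: "openT S m M N \<Longrightarrow> openT S m N P \<Longrightarrow> openT S m M P"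
  unfolding openT_def using simT_trans by blast

lemma openV_trans: "openV S m V W \<Longrightarrow> openV S m W X \<Longrightarrow> openV S m V X"
  unfolding openV_def using simV_trans by blast

lemma openT_psubst:
  assumes "openT S m M N" and \<sigma>: "\<forall>i<m. wf_val ar k (\<sigma> i)"
  shows "openT S k (psubst_trm \<sigma> M) (psubst_trm \<sigma> N)"
  using assms cval_psubst[OF \<sigma>] unfolding openT_def by (auto simp: psubst_psubst wf_psubst o_def)

lemma openV_psubst:
  assumes "openV S m V W" and \<sigma>: "\<forall>i<m. wf_val ar k (\<sigma> i)"
  shows "openV S k (psubst_val \<sigma> V) (psubst_val \<sigma> W)"
  using assms cval_psubst[OF \<sigma>] unfolding openV_def by (auto simp: psubst_psubst wf_psubst o_def)

end

section \<open>The Howe extension\<close>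

context relator_sem
begin

lemma howe_wf:
  "howeT S m M N \<Longrightarrow> wf_trm ar m M \<and> wf_trm ar m N"
  "howeV S m V W \<Longrightarrow> wf_val ar m V \<and> wf_val ar m W"
  by (induction rule: howeT_howeV.inducts) (auto simp: openT_def openV_def in_set_conv_nth)

lemma howeV_openV_trans: "howeV S m V W \<Longrightarrow> openV S m W X \<Longrightarrow> howeV S m V X"
  by (erule howeV.cases) (auto intro: howeT_howeV.intros openV_trans)

lemma howe_refl:
  fixes M :: "'op trm" and V :: "'op val"
  shows "wf_trm ar m M \<Longrightarrow> howeT S m M M" and "wf_val ar m V \<Longrightarrow> howeV S m V V"
proof (induction M and V arbitrary: m and m)
  case (Op s Ms)
  then show ?case
    by (intro H6[of Ms Ms]) (auto intro: openT_refl)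
qed (auto intro!: H1 H2 H3 H4 H5 openT_refl openV_refl)

text \<open>The invariant Q on pairs of substitutions is instantiated twice: first with renamings,
  which yields weakening (howeV_lift), and then with pointwise Howe-related substitutions, whose
  extension under a binder needs that weakening.\<close>

lemma howe_psubst_general:
  assumes ext: "\<And>m k \<sigma> \<tau>. Q m k \<sigma> \<tau> \<Longrightarrow> Q (Suc m) (Suc k) (ext_subst \<sigma>) (ext_subst \<tau>)"
    and var: "\<And>m k \<sigma> \<tau> i. Q m k \<sigma> \<tau> \<Longrightarrow> i < m \<Longrightarrow> howeV S k (\<sigma> i) (\<tau> i)"
  shows "howeT S m M N \<Longrightarrow> Q m k \<sigma> \<tau> \<Longrightarrow> howeT S k (psubst_trm \<sigma> M) (psubst_trm \<tau> N)"
    and "howeV S m V W \<Longrightarrow> Q m k \<sigma> \<tau> \<Longrightarrow> howeV S k (psubst_val \<sigma> V) (psubst_val \<tau> W)"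
proof -
  have \<tau>_wf: "\<forall>i<m. wf_val ar k (\<tau> i)" if "Q m k \<sigma> \<tau>" for m k \<sigma> \<tau>
    using var[OF that] howe_wf(2) by blast
  show "howeT S m M N \<Longrightarrow> Q m k \<sigma> \<tau> \<Longrightarrow> howeT S k (psubst_trm \<sigma> M) (psubst_trm \<tau> N)"
    and "howeV S m V W \<Longrightarrow> Q m k \<sigma> \<tau> \<Longrightarrow> howeV S k (psubst_val \<sigma> V) (psubst_val \<tau> W)"
  proof (induction arbitrary: k \<sigma> \<tau> and k \<sigma> \<tau> rule: howeT_howeV.inducts)
    case (H1 i n V)
    then have "openV S k (psubst_val \<tau> (Var i)) (psubst_val \<tau> V)"
      by (intro openV_psubst) (auto dest: \<tau>_wf)
    with H1 show ?case
      by (auto intro: var howeV_openV_trans)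
  next
    case (H2 n M L V)
    then have "openV S k (psubst_val \<tau> (Lam L)) (psubst_val \<tau> V)"
      by (intro openV_psubst) (auto dest: \<tau>_wf)
    with H2 show ?case
      by (auto intro!: howeT_howeV.H2 ext)
  next
    case (H3 n V W N)
    then have "openT S k (psubst_trm \<tau> (Ret W)) (psubst_trm \<tau> N)"
      by (intro openT_psubst) (auto dest: \<tau>_wf)
    with H3 show ?case
      by (auto intro: howeT_howeV.H3)
  next
    case (H4 n V V' W W' N)
    then have "openT S k (psubst_trm \<tau> (App V' W')) (psubst_trm \<tau> N)"
      by (intro openT_psubst) (auto dest: \<tau>_wf)
    moreover have "howeV S k (psubst_val \<sigma> V) (psubst_val \<tau> V')"
      and "howeV S k (psubst_val \<sigma> W) (psubst_val \<tau> W')"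
      using H4 by blast+
    ultimately show ?case
      by (auto intro: howeT_howeV.H4)
  next
    case (H5 n M L M' L' N)
    then have "openT S k (psubst_trm \<tau> (To L L')) (psubst_trm \<tau> N)"
      by (intro openT_psubst) (auto dest: \<tau>_wf)
    moreover have "howeT S (Suc k) (psubst_trm (ext_subst \<sigma>) M') (psubst_trm (ext_subst \<tau>) L')"
      using H5 ext by blast
    ultimately show ?case
      using H5 by (auto intro: howeT_howeV.H5)
  next
    case (H6 Ms Ns n s N)
    then have op: "openT S k (Op s (map (psubst_trm \<tau>) Ns)) (psubst_trm \<tau> N)"
      using openT_psubst[of n "Op s Ns" N] \<tau>_wf by simp
    show ?case
      unfolding psubst_trm.simps by (rule howeT_howeV.H6[OF _ _ op]) (use H6 in auto)
  qed
qed

lemma howeV_lift: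
  assumes "howeV S k V W"
  shows "howeV S (Suc k) (lift_val 0 V) (lift_val 0 W)"
proof -
  let ?Q = "\<lambda>m k \<sigma> \<tau>. \<exists>r. \<sigma> = ren r \<and> \<tau> = ren r \<and> (\<forall>i<m. r i < k)"
  have ext: "?Q (Suc m) (Suc k) (ext_subst \<sigma>) (ext_subst \<tau>)" if "?Q m k \<sigma> \<tau>" for m k \<sigma> \<tau>
  proof -
    from that obtain r where "\<sigma> = ren r" "\<tau> = ren r" "\<forall>i<m. r i < k" by blast
    then show ?thesis
      by (intro exI[of _ "up_ren r"]) (auto simp: ext_subst_ren up_ren_def split: nat.split)
  qed
  have var: "howeV S k (\<sigma> i) (\<tau> i)" if "?Q m k \<sigma> \<tau>" "i < m" for m k \<sigma> \<tau> i
    using that by (auto intro: howe_refl(2))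
  have "?Q k (Suc k) (ren Suc) (ren Suc)" by auto
  with ext var assms show ?thesis
    unfolding lift_val_0 by (rule howe_psubst_general(2)[where Q = ?Q])
qed

lemma howe_psubst:
  assumes "\<forall>i<m. howeV S k (\<sigma> i) (\<tau> i)"
  shows "howeT S m M N \<Longrightarrow> howeT S k (psubst_trm \<sigma> M) (psubst_trm \<tau> N)"
    and "howeV S m V W \<Longrightarrow> howeV S k (psubst_val \<sigma> V) (psubst_val \<tau> W)"
proof -
  let ?Q = "\<lambda>m k \<sigma> \<tau>. \<forall>i<m. howeV S k (\<sigma> i) (\<tau> i)"
  have ext: "?Q (Suc m) (Suc k) (ext_subst \<sigma>) (ext_subst \<tau>)" if "?Q m k \<sigma> \<tau>" for m k \<sigma> \<tau>
    using that by (auto simp: ext_subst_def intro: howe_refl(2) howeV_lift split: nat.split)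
  have var: "howeV S k (\<sigma> i) (\<tau> i)" if "?Q m k \<sigma> \<tau>" "i < m" for m k \<sigma> \<tau> i
    using that by blast
  show "howeT S k (psubst_trm \<sigma> M) (psubst_trm \<tau> N)" if "howeT S m M N"
    using ext var that assms by (rule howe_psubst_general(1)[where Q = ?Q])
  show "howeV S k (psubst_val \<sigma> V) (psubst_val \<tau> W)" if "howeV S m V W"
    using ext var that assms by (rule howe_psubst_general(2)[where Q = ?Q])
qed

lemma howeT_subst1:
  "howeT S (Suc 0) M L \<Longrightarrow> howeV S 0 V W \<Longrightarrow> howeT S 0 (subst1 V M) (subst1 W L)"
  unfolding subst1_def by (rule howe_psubst(1)) (auto split: nat.split)

end

context relator_sem
begin

lemma howeT_0_ctrm: "howeT S 0 M N \<Longrightarrow> ctrm S M \<and> ctrm S N"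
  using howe_wf(1) unfolding ctrm_def by blast

lemma howeV_0_cval: "howeV S 0 V W \<Longrightarrow> cval S V \<and> cval S W"
  using howe_wf(2) unfolding cval_def by blast

lemma howeT_0_App_cases:
  assumes "howeT S 0 (App V U) N"
  obtains M' L U' where "V = Lam M'" and "howeT S (Suc 0) M' L" and "howeV S 0 U U'"
    and "simT S (App (Lam L) U') N"
proof -
  from assms obtain V' U' where V: "howeV S 0 V V'" and U: "howeV S 0 U U'"
    and N: "openT S 0 (App V' U') N"
    by (cases rule: howeT.cases) auto
  obtain M' where "V = Lam M'"
    using howe_wf(2)[OF V] by (cases V) auto
  with V obtain L where "howeT S (Suc 0) M' L" and "openV S 0 (Lam L) V'"
    by (cases rule: howeV.cases) auto
  moreover have "simT S (App (Lam L) U') N"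
    using calculation(2) N howeV_0_cval[OF U]
    by (auto simp: openV_0_iff openT_0_iff intro: simT_trans simV_App)
  ultimately show ?thesis
    using that \<open>V = Lam M'\<close> U by blast
qed

lemma rlt_howeV_simT_trans:
  assumes "rlt S (howeV S 0) u (sem S L)" and "simT S L N"
  shows "rlt S (howeV S 0) u (sem S N)"
proof -
  have "rlt S (howeV S 0 OO simV S) u (sem S N)"
    using assms simT_sem rlt_OO by blast
  then show ?thesis
    by (rule rlt_mono) (auto simp: openV_0_iff intro: howeV_openV_trans)
qed

end

locale howe_setting = cont_sigma_sem S + relator_sem S for S :: "('op, 't) effsem" +
  assumes rlt_inductive: "inductive_relator S"
    and rlt_respects_sigma: "respects_sigma S"
begin

lemma rlt_bot: "rlt S R (ord_bot S) v"
  using rlt_inductive unfolding inductive_relator_def by blast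

lemma rlt_lub: "omega_chain le c \<Longrightarrow> (\<And>n. rlt S R (c n) v) \<Longrightarrow> rlt S R (lub S c) v"
  using rlt_inductive unfolding inductive_relator_def by blast

lemma rlt_op_int:
  "length us = sig_ar S s \<Longrightarrow> list_all2 (rlt S R) us vs \<Longrightarrow> rlt S R (op_int S s us) (op_int S s vs)"
  using rlt_respects_sigma unfolding respects_sigma_def by blast

lemma approx_howeT_sem: "howeT S 0 M N \<Longrightarrow> rlt S (howeV S 0) (approx S n M) (sem S N)"
proof (induction n arbitrary: M N)
  case 0
  then show ?case by (simp add: rlt_bot)
next
  case (Suc n)
  from Suc.prems show ?case
  proof (cases rule: howeT.cases)
    case (H3 V W)
    then have "rlt S (howeV S 0) (m_unit S V) (sem S (Ret W))"
      using howeV_0_cval[OF H3(2)] by (simp add: sem_Ret rlt_unit)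
    with H3 show ?thesis
      by (simp add: rlt_howeV_simT_trans openT_0_iff)
  next
    case (H4 V _ U)
    then obtain M' L U' where "V = Lam M'" and L: "howeT S (Suc 0) M' L" and U: "howeV S 0 U U'"
      and "simT S (App (Lam L) U') N"
      using Suc.prems by (auto elim: howeT_0_App_cases)
    moreover have "sem S (App (Lam L) U') = sem S (subst1 U' L)"
      using howeV_0_cval[OF U] howe_wf(1)[OF L] by (simp add: sem_App_Lam)
    ultimately show ?thesis
      using Suc.IH[OF howeT_subst1[OF L U]] rlt_howeV_simT_trans[of _ "App (Lam L) U'" N] H4(1)
      by simp
  next
    case (H5 M1 L M' L')
    have "rlt S (howeV S 0) (m_bind S (approx S n M1) (\<lambda>V. approx S n (subst1 V M')))
                            (m_bind S (sem S L) (\<lambda>W. sem S (subst1 W L')))"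
    proof (rule rlt_bind)
      show "rlt S (howeV S 0) (approx S n M1) (sem S L)"
        using Suc.IH H5(2) .
      show "rlt S (howeV S 0) (approx S n (subst1 V M')) (sem S (subst1 W L'))"
        if "howeV S 0 V W" for V W
        using Suc.IH howeT_subst1[OF H5(3) that] .
    qed
    moreover have "ctrm S (To L L')"
      using H5(4) simT_ctrm by (simp add: openT_0_iff)
    ultimately show ?thesis
      using H5 rlt_howeV_simT_trans[of _ "To L L'" N] by (simp add: sem_To openT_0_iff)
  next
    case (H6 Ms Ns s)
    have "length Ms = sig_ar S s"
      using howeT_0_ctrm[OF Suc.prems] H6(1) by (simp add: ctrm_def)
    then have "rlt S (howeV S 0) (op_int S s (map (approx S n) Ms)) (op_int S s (map (sem S) Ns))"
      using H6(2,3) Suc.IH by (intro rlt_op_int) (auto simp: list_all2_conv_all_nth)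
    moreover have "ctrm S (Op s Ns)"
      using H6(4) simT_ctrm by (simp add: openT_0_iff)
    ultimately show ?thesis
      using H6 rlt_howeV_simT_trans[of _ "Op s Ns" N] by (simp add: sem_Op openT_0_iff)
  qed
qed

lemma howeT_sem: "howeT S 0 M N \<Longrightarrow> rlt S (howeV S 0) (sem S M) (sem S N)"
  unfolding sem_def[of S M]
  using howeT_0_ctrm approx_chain approx_howeT_sem by (blast intro: rlt_lub)

lemma app_sim_howe: "app_sim S (howeT S 0) (howeV S 0)"
proof -
  have "howeT S 0 (App V U) (App W U)" if "howeV S 0 V W" and "cval S U" for V W U
    using that howeV_0_cval[OF that(1)]
    by (intro H4[where V' = W and W' = U]) (auto simp: cval_def intro: howe_refl(2) openT_refl)
  then show ?thesis
    unfolding app_sim_def using howeT_0_ctrm howeV_0_cval howeT_sem by blast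
qed

end

theorem mainTheorem9:
  fixes S :: "('op, 't) effsem"
  assumes "cont_sigma_monad S"
    and "is_relator S"
    and "inductive_relator S"
    and "respects_sigma S"
  shows "app_sim S (howeT S 0) (howeV S 0)"
proof -
  interpret howe_setting S
    using assms by (simp add: howe_setting_def howe_setting_axioms_def cont_sigma_sem_def relator_sem_def)
  show ?thesis by (rule app_sim_howe)
qed

end
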